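(* Let $G_1$ and $G_2$ be two connected graphs, each of diameter at most two. Then $\chi_L(G_1+G_2)=\chi_L(G_1)+\chi_L(G_2)$.
   Context: All graphs are finite, simple (no loops or multiple edges). A proper $k$-coloring of $G$ is a map $f$ from $V(G)$ onto $[k]=\{1,\dots,k\}$ such that adjacent vertices receive different colors. For a connected graph $G$ with proper $k$-coloring $f$, let $V_i=f^{-1}(i)$ and $\Pi=(V_1,\dots,V_k)$; the color code of a vertex $v$ is $c_\Pi(v)=(d(v,V_1),\dots,d(v,V_k))$, where $d(v,S)=\min_{x\in S} d(v,x)$. The coloring $f$ is a locating coloring if distinct vertices have distinct color codes; the locating chromatic number $\chi_L(G)$ is the minimum number of colors in a locating coloring of $G$. The join $G_1+G_2$ is the graph on $V(G_1)\cup V(G_2)$ (disjoint) with edge set $E(G_1)\cup E(G_2)\cup\{uv: u\in V(G_1), v\in V(G_2)\}$. *)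

theory Defs
  imports Main
begin

record 'a graph =
  verts :: "'a set"
  adj :: "'a \<Rightarrow> 'a \<Rightarrow> bool"

definition simple_graph :: "'a graph \<Rightarrow> bool" where
  "simple_graph G \<longleftrightarrow> finite (verts G)
     \<and> (\<forall>u v. adj G u v \<longrightarrow> u \<in> verts G \<and> v \<in> verts G)
     \<and> (\<forall>u v. adj G u v \<longrightarrow> adj G v u)
     \<and> (\<forall>u. \<not> adj G u u)"

definition walk :: "'a graph \<Rightarrow> 'a list \<Rightarrow> bool" where
  "walk G xs \<longleftrightarrow> xs \<noteq> [] \<and> set xs \<subseteq> verts G
     \<and> (\<forall>i. Suc i < length xs \<longrightarrow> adj G (xs ! i) (xs ! Suc i))"

definition connected_graph :: "'a graph \<Rightarrow> bool" where
  "connected_graph G \<longleftrightarrow> verts G \<noteq> {}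
     \<and> (\<forall>u\<in>verts G. \<forall>v\<in>verts G. \<exists>xs. walk G xs \<and> hd xs = u \<and> last xs = v)"

text \<open>Distance: length (number of edges) of a shortest walk.\<close>
definition gdist :: "'a graph \<Rightarrow> 'a \<Rightarrow> 'a \<Rightarrow> nat" where
  "gdist G u v = (LEAST n. \<exists>xs. walk G xs \<and> hd xs = u \<and> last xs = v \<and> length xs = Suc n)"

definition diameter :: "'a graph \<Rightarrow> nat" where
  "diameter G = Max {gdist G u v | u v. u \<in> verts G \<and> v \<in> verts G}"

definition set_dist :: "'a graph \<Rightarrow> 'a \<Rightarrow> 'a set \<Rightarrow> nat" where
  "set_dist G v S = Min ((\<lambda>x. gdist G v x) ` S)"

definition proper_coloring :: "'a graph \<Rightarrow> nat \<Rightarrow> ('a \<Rightarrow> nat) \<Rightarrow> bool" where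
  "proper_coloring G k f \<longleftrightarrow> f ` verts G = {1..k}
     \<and> (\<forall>u\<in>verts G. \<forall>v\<in>verts G. adj G u v \<longrightarrow> f u \<noteq> f v)"

definition color_class :: "'a graph \<Rightarrow> ('a \<Rightarrow> nat) \<Rightarrow> nat \<Rightarrow> 'a set" where
  "color_class G f i = {x \<in> verts G. f x = i}"

definition color_code :: "'a graph \<Rightarrow> nat \<Rightarrow> ('a \<Rightarrow> nat) \<Rightarrow> 'a \<Rightarrow> nat list" where
  "color_code G k f v = map (\<lambda>i. set_dist G v (color_class G f i)) [1..<Suc k]"

definition locating_coloring :: "'a graph \<Rightarrow> nat \<Rightarrow> ('a \<Rightarrow> nat) \<Rightarrow> bool" where
  "locating_coloring G k f \<longleftrightarrow> proper_coloring G k f \<and> inj_on (color_code G k f) (verts G)"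

definition locating_chromatic_number :: "'a graph \<Rightarrow> nat" where
  "locating_chromatic_number G = (LEAST k. \<exists>f. locating_coloring G k f)"

definition graph_join :: "'a graph \<Rightarrow> 'b graph \<Rightarrow> ('a + 'b) graph" where
  "graph_join G1 G2 = \<lparr> verts = verts G1 <+> verts G2,
     adj = (\<lambda>x y. case (x, y) of
              (Inl a, Inl b) \<Rightarrow> adj G1 a b
            | (Inr a, Inr b) \<Rightarrow> adj G2 a b
            | (Inl a, Inr b) \<Rightarrow> a \<in> verts G1 \<and> b \<in> verts G2
            | (Inr a, Inl b) \<Rightarrow> a \<in> verts G2 \<and> b \<in> verts G1) \<rparr>"

end

theory Submission
  imports Defs
begin

text \<open>In a connected graph of diameter at most two the distance between two vertices is 0, 1
  or 2 according to whether they are equal, adjacent or neither; the join of two nonempty graphs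
  is such a graph, and each side sits in it isometrically. Hence locating colorings of G1 and G2
  with disjoint palettes combine into one of G1 + G2: vertices on the same side are told apart by
  that side's colors, vertices on different sides by their own color. Conversely a proper coloring
  of the join uses disjoint palettes on the two sides, and its restriction to either side,
  renumbered, is locating, because every color class of the other side is at distance one from
  all of its vertices.\<close>

lemma walk_singleton [simp]: "walk G [u] \<longleftrightarrow> u \<in> verts G"
  by (simp add: walk_def)

lemma walk_Cons_Cons [simp]:
  "walk G (u # v # xs) \<longleftrightarrow> u \<in> verts G \<and> adj G u v \<and> walk G (v # xs)"
  by (auto simp: walk_def nth_Cons split: nat.splits)

lemma gdist_less_length:
  assumes "walk G xs" "hd xs = u" "last xs = v"
  shows "gdist G u v < length xs"
proof -
  have "length xs = Suc (length xs - 1)" using assms(1) by (simp add: walk_def)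
  then have "gdist G u v \<le> length xs - 1"
    unfolding gdist_def using assms by (intro Least_le) auto
  then show ?thesis using assms(1) by (cases xs) (auto simp: walk_def)
qed

lemma gdist_shortest_walk:
  assumes "walk G xs" "hd xs = u" "last xs = v"
  obtains ys where "walk G ys" "hd ys = u" "last ys = v" "length ys = Suc (gdist G u v)"
proof -
  have "length xs = Suc (length xs - 1)" using assms(1) by (simp add: walk_def)
  then have "\<exists>n ys. walk G ys \<and> hd ys = u \<and> last ys = v \<and> length ys = Suc n"
    using assms by blast
  then have "\<exists>ys. walk G ys \<and> hd ys = u \<and> last ys = v \<and> length ys = Suc (gdist G u v)"
    unfolding gdist_def by (rule LeastI_ex)
  then show ?thesis using that by blast
qed

lemma gdist_eq_0_iff:
  assumes "walk G xs" "hd xs = u" "last xs = v"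
  shows "gdist G u v = 0 \<longleftrightarrow> u = v"
proof
  assume "gdist G u v = 0"
  with assms obtain ys where "hd ys = u" "last ys = v" "length ys = 1"
    by (metis One_nat_def gdist_shortest_walk)
  then show "u = v" by (cases ys) auto
next
  assume "u = v"
  have "u \<in> verts G" using assms by (metis hd_in_set subsetD walk_def)
  then show "gdist G u v = 0"
    using gdist_less_length[of G "[u]" u v] \<open>u = v\<close> by simp
qed

lemma gdist_eq_1_iff:
  assumes "walk G xs" "hd xs = u" "last xs = v"
  shows "gdist G u v = 1 \<longleftrightarrow> u \<noteq> v \<and> adj G u v"
proof
  assume d: "gdist G u v = 1"
  with assms obtain ys where "walk G ys" "hd ys = u" "last ys = v" "length ys = 2"
    by (metis gdist_shortest_walk numeral_2_eq_2 One_nat_def)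
  then have "ys = [u, v]" by (cases ys; cases "tl ys") auto
  then have "walk G [u, v]" using \<open>walk G ys\<close> by simp
  then show "u \<noteq> v \<and> adj G u v" using d gdist_eq_0_iff[OF assms] by auto
next
  assume "u \<noteq> v \<and> adj G u v"
  moreover have "u \<in> verts G" "v \<in> verts G"
    using assms by (metis hd_in_set last_in_set subsetD walk_def)+
  ultimately have "gdist G u v < 2" using gdist_less_length[of G "[u, v]" u v] by simp
  then show "gdist G u v = 1"
    using gdist_eq_0_iff[OF assms] \<open>u \<noteq> v \<and> adj G u v\<close> by simp
qed

lemma gdist_adj:
  "adj G u v \<Longrightarrow> u \<noteq> v \<Longrightarrow> u \<in> verts G \<Longrightarrow> v \<in> verts G \<Longrightarrow> gdist G u v = 1"
  using gdist_eq_1_iff[of G "[u, v]"] by simp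

lemma gdist_if_short_walk:
  assumes "walk G xs" "hd xs = u" "last xs = v" "length xs \<le> 3"
  shows "gdist G u v = (if u = v then 0 else if adj G u v then 1 else 2)"
  using gdist_less_length[OF assms(1-3)] gdist_eq_0_iff[OF assms(1-3)]
    gdist_eq_1_iff[OF assms(1-3)] assms(4) by auto

definition dist_determined_by_adj :: "'a graph \<Rightarrow> bool" where
  "dist_determined_by_adj G \<longleftrightarrow> (\<forall>u\<in>verts G. \<forall>v\<in>verts G.
     gdist G u v = (if u = v then 0 else if adj G u v then 1 else 2))"

lemma dist_determined_by_adj_if_diameter_le_2:
  assumes "simple_graph G" "connected_graph G" "diameter G \<le> 2"
  shows "dist_determined_by_adj G"
  unfolding dist_determined_by_adj_def
proof (intro ballI)
  fix u v assume u: "u \<in> verts G" and v: "v \<in> verts G"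
  let ?D = "{gdist G u v | u v. u \<in> verts G \<and> v \<in> verts G}"
  have "?D = (\<lambda>(u, v). gdist G u v) ` (verts G \<times> verts G)" by auto
  then have "finite ?D" using assms(1) by (simp add: simple_graph_def)
  then have "gdist G u v \<le> 2"
    using u v assms(3) unfolding diameter_def
    by (metis (mono_tags, lifting) Max_ge mem_Collect_eq order_trans)
  moreover obtain xs where "walk G xs" "hd xs = u" "last xs = v"
    using assms(2) u v unfolding connected_graph_def by blast
  ultimately obtain ys where "walk G ys" "hd ys = u" "last ys = v" "length ys \<le> 3"
    by (metis gdist_shortest_walk Suc_le_mono numeral_3_eq_3 numeral_2_eq_2)
  then show "gdist G u v = (if u = v then 0 else if adj G u v then 1 else 2)"
    by (rule gdist_if_short_walk)
qed

lemma verts_graph_join: "verts (graph_join G1 G2) = Inl ` verts G1 \<union> Inr ` verts G2"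
  by (auto simp: graph_join_def)

lemma adj_graph_join [simp]:
  "adj (graph_join G1 G2) (Inl a) (Inl b) \<longleftrightarrow> adj G1 a b"
  "adj (graph_join G1 G2) (Inr c) (Inr d) \<longleftrightarrow> adj G2 c d"
  "adj (graph_join G1 G2) (Inl a) (Inr c) \<longleftrightarrow> a \<in> verts G1 \<and> c \<in> verts G2"
  "adj (graph_join G1 G2) (Inr c) (Inl a) \<longleftrightarrow> c \<in> verts G2 \<and> a \<in> verts G1"
  by (simp_all add: graph_join_def)

lemma dist_determined_by_adj_graph_join:
  assumes "verts G1 \<noteq> {}" "verts G2 \<noteq> {}"
  shows "dist_determined_by_adj (graph_join G1 G2)"
  unfolding dist_determined_by_adj_def
proof (intro ballI)
  let ?J = "graph_join G1 G2"
  fix x y assume x: "x \<in> verts ?J" and y: "y \<in> verts ?J"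
  obtain a b where a: "a \<in> verts G1" and b: "b \<in> verts G2" using assms by blast
  \<comment> \<open>vertices on the same side share a neighbour on the other side\<close>
  define w where "w = (case x of Inl _ \<Rightarrow> Inr b | Inr _ \<Rightarrow> Inl a)"
  have "\<exists>xs. walk ?J xs \<and> hd xs = x \<and> last xs = y \<and> length xs \<le> 3"
  proof (cases "walk ?J [x, y]")
    case True
    then show ?thesis by (intro exI[of _ "[x, y]"]) simp
  next
    case False
    then have "walk ?J [x, w, y]"
      using x y a b by (auto simp: w_def verts_graph_join)
    then show ?thesis by (intro exI[of _ "[x, w, y]"]) simp
  qed
  then show "gdist ?J x y = (if x = y then 0 else if adj ?J x y then 1 else 2)"
    using gdist_if_short_walk by metis
qed

lemma gdist_graph_join_Inl:
  assumes "dist_determined_by_adj G1" "verts G2 \<noteq> {}" "a \<in> verts G1" "b \<in> verts G1"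
  shows "gdist (graph_join G1 G2) (Inl a) (Inl b) = gdist G1 a b"
proof -
  have "verts G1 \<noteq> {}" using assms(3) by blast
  then show ?thesis
    using assms dist_determined_by_adj_graph_join[of G1 G2]
    unfolding dist_determined_by_adj_def verts_graph_join by simp
qed

lemma gdist_graph_join_Inr:
  assumes "dist_determined_by_adj G2" "verts G1 \<noteq> {}" "a \<in> verts G2" "b \<in> verts G2"
  shows "gdist (graph_join G1 G2) (Inr a) (Inr b) = gdist G2 a b"
proof -
  have "verts G2 \<noteq> {}" using assms(3) by blast
  then show ?thesis
    using assms dist_determined_by_adj_graph_join[of G1 G2]
    unfolding dist_determined_by_adj_def verts_graph_join by simp
qed

lemma color_code_eq_iff:
  "color_code G k f x = color_code G k f y \<longleftrightarrow>
     (\<forall>i\<in>{1..k}. set_dist G x (color_class G f i) = set_dist G y (color_class G f i))"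
  unfolding color_code_def map_eq_conv set_upt atLeastLessThanSuc_atLeastAtMost by (rule refl)

lemma color_class_subset: "color_class G f i \<subseteq> verts G"
  by (auto simp: color_class_def)

lemma set_dist_image:
  assumes "\<forall>v\<in>S. gdist J x (e v) = gdist H a v"
  shows "set_dist J x (e ` S) = set_dist H a S"
  unfolding set_dist_def image_image using assms by (metis image_cong)

lemma set_dist_const:
  assumes "S \<noteq> {}" "\<forall>v\<in>S. gdist G x v = c"
  shows "set_dist G x S = c"
proof -
  have "(\<lambda>v. gdist G x v) ` S = {c}" using assms by auto
  then show ?thesis by (simp add: set_dist_def)
qed

lemma locating_chromatic_number_le:
  "locating_coloring G k f \<Longrightarrow> locating_chromatic_number G \<le> k"
  unfolding locating_chromatic_number_def by (rule Least_le) blast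

lemma locating_coloring_chromatic_number:
  assumes "locating_coloring G k f"
  obtains g where "locating_coloring G (locating_chromatic_number G) g"
proof -
  have "\<exists>k g. locating_coloring G k g" using assms by blast
  then have "\<exists>g. locating_coloring G (LEAST k. \<exists>f. locating_coloring G k f) g"
    by (rule LeastI_ex)
  then show ?thesis using that unfolding locating_chromatic_number_def by blast
qed

text \<open>Coloring every vertex differently is locating, since distinct vertices of a connected
  graph are at nonzero distance.\<close>
lemma locating_coloring_exists:
  assumes "simple_graph G" "connected_graph G"
  obtains k f where "locating_coloring G k f"
proof -
  have fin: "finite (verts G)" using assms(1) by (simp add: simple_graph_def)
  obtain g where g: "bij_betw g (verts G) {1..card (verts G)}"
    using finite_same_card_bij[OF fin, of "{1..card (verts G)}"] by auto
  have "u \<noteq> v" if "adj G u v" for u v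
    using that assms(1) by (auto simp: simple_graph_def)
  then have proper: "proper_coloring G (card (verts G)) g"
    using g by (auto simp: proper_coloring_def bij_betw_def dest: inj_onD)
  have singleton_class: "color_class G g (g v) = {v}" if "v \<in> verts G" for v
    using g that by (auto simp: color_class_def bij_betw_def dest: inj_onD)
  have "inj_on (color_code G (card (verts G)) g) (verts G)"
  proof (rule inj_onI)
    fix u v assume u: "u \<in> verts G" and v: "v \<in> verts G"
      and "color_code G (card (verts G)) g u = color_code G (card (verts G)) g v"
    moreover have "g u \<in> {1..card (verts G)}" using g u by (auto simp: bij_betw_def)
    ultimately have "set_dist G u {u} = set_dist G v {u}"
      using singleton_class[OF u] by (metis color_code_eq_iff)
    then have "gdist G u u = gdist G v u" by (simp add: set_dist_def)
    moreover obtain xs ys where "walk G xs" "hd xs = u" "last xs = u"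
      and "walk G ys" "hd ys = v" "last ys = u"
      using assms(2) u v unfolding connected_graph_def by metis
    ultimately show "u = v" using gdist_eq_0_iff[of G ys v u] gdist_eq_0_iff[of G xs u u] by simp
  qed
  then show ?thesis using proper that unfolding locating_coloring_def by blast
qed

lemma card_colors_split:
  assumes "proper_coloring G k f" "verts G = A \<union> B" "\<forall>a\<in>A. \<forall>b\<in>B. adj G a b"
  shows "card (f ` A) + card (f ` B) = k"
proof -
  have "f ` A \<inter> f ` B = {}"
    using assms unfolding proper_coloring_def by fastforce
  moreover have "f ` A \<union> f ` B = {1..k}"
    using assms(1,2) unfolding proper_coloring_def by (simp add: image_Un)
  moreover have "finite (f ` A)" "finite (f ` B)"
    using calculation(2) by (metis finite_Un finite_atLeastAtMost)+
  ultimately show ?thesis by (metis card_Un_disjoint card_atLeastAtMost diff_Suc_1)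
qed

lemma color_code_eq_extend_joined:
  assumes sub: "e ` verts H \<subseteq> verts J"
    and dist: "\<forall>u\<in>verts H. \<forall>v\<in>verts H. gdist J (e u) (e v) = gdist H u v"
    and joined: "\<forall>u\<in>verts H. \<forall>w\<in>verts J - e ` verts H. adj J (e u) w"
    and classes: "\<forall>i\<in>{1..k}. (\<exists>j\<in>{1..l}. color_class J f i = e ` color_class H g j)
      \<or> color_class J f i \<noteq> {} \<and> color_class J f i \<subseteq> verts J - e ` verts H"
    and "a \<in> verts H" "b \<in> verts H" "color_code H l g a = color_code H l g b"
  shows "color_code J k f (e a) = color_code J k f (e b)"
  unfolding color_code_eq_iff
proof
  fix i assume "i \<in> {1..k}"
  show "set_dist J (e a) (color_class J f i) = set_dist J (e b) (color_class J f i)"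
  proof (cases "\<exists>j\<in>{1..l}. color_class J f i = e ` color_class H g j")
    case True
    then obtain j where "j \<in> {1..l}" and j: "color_class J f i = e ` color_class H g j" ..
    have "set_dist J (e x) (color_class J f i) = set_dist H x (color_class H g j)"
      if "x \<in> verts H" for x
      unfolding j using dist that color_class_subset[of H g j] by (intro set_dist_image) blast
    then show ?thesis using assms(5-7) \<open>j \<in> {1..l}\<close> unfolding color_code_eq_iff by metis
  next
    case False
    then have outside: "color_class J f i \<noteq> {}" "color_class J f i \<subseteq> verts J - e ` verts H"
      using classes \<open>i \<in> {1..k}\<close> by blast+
    have "gdist J (e x) w = 1" if "x \<in> verts H" "w \<in> color_class J f i" for x w
      using that joined outside sub by (intro gdist_adj) auto
    then show ?thesis using outside assms(5,6) by (simp add: set_dist_const)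
  qed
qed

text \<open>A subgraph that is isometrically embedded and joined to all remaining vertices inherits
  a locating coloring from the colors it uses: every other color class is at distance one
  from all of its vertices.\<close>
lemma locating_chromatic_number_le_card_restrict:
  assumes loc: "locating_coloring J k f"
    and inj: "inj_on e (verts H)" and sub: "e ` verts H \<subseteq> verts J"
    and dist: "\<forall>u\<in>verts H. \<forall>v\<in>verts H. gdist J (e u) (e v) = gdist H u v"
    and adj: "\<forall>u\<in>verts H. \<forall>v\<in>verts H. adj H u v \<longrightarrow> adj J (e u) (e v)"
    and joined: "\<forall>u\<in>verts H. \<forall>w\<in>verts J - e ` verts H. adj J (e u) w"
  shows "locating_chromatic_number H \<le> card (f ` e ` verts H)"
proof -
  define C where "C = f ` e ` verts H"
  have onto: "f ` verts J = {1..k}"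
    and proper: "\<forall>u\<in>verts J. \<forall>v\<in>verts J. adj J u v \<longrightarrow> f u \<noteq> f v"
    and code_inj: "inj_on (color_code J k f) (verts J)"
    using loc by (auto simp: locating_coloring_def proper_coloring_def)
  have "C \<subseteq> {1..k}" using onto sub unfolding C_def by blast
  then have "finite C" by (rule finite_subset) simp
  then obtain h where h: "bij_betw h C {1..card C}"
    using finite_same_card_bij[of C "{1..card C}"] by auto
  define g where "g u = h (f (e u))" for u
  have outside: "f w \<notin> C" if w: "w \<in> verts J - e ` verts H" for w
  proof
    assume "f w \<in> C"
    then obtain u where u: "u \<in> verts H" "f (e u) = f w" unfolding C_def by auto
    then have "adj J (e u) w" "e u \<in> verts J" using joined sub w by auto
    then show False using proper w u by auto
  qed
  have class_inside: "color_class J f i = e ` color_class H g (h i)" if "i \<in> C" for i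
  proof -
    have "color_class J f i \<subseteq> e ` verts H" using outside that by (auto simp: color_class_def)
    then show ?thesis
      using that h sub unfolding color_class_def g_def C_def bij_betw_def inj_on_def by auto
  qed
  have class_outside: "color_class J f i \<noteq> {}" "color_class J f i \<subseteq> verts J - e ` verts H"
    if "i \<in> {1..k} - C" for i
    using that onto unfolding color_class_def C_def by force+
  have classes: "\<forall>i\<in>{1..k}. (\<exists>j\<in>{1..card C}. color_class J f i = e ` color_class H g j)
      \<or> color_class J f i \<noteq> {} \<and> color_class J f i \<subseteq> verts J - e ` verts H"
  proof
    fix i assume "i \<in> {1..k}"
    show "(\<exists>j\<in>{1..card C}. color_class J f i = e ` color_class H g j)
      \<or> color_class J f i \<noteq> {} \<and> color_class J f i \<subseteq> verts J - e ` verts H"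
    proof (cases "i \<in> C")
      case True
      then show ?thesis using class_inside[OF True] bij_betw_apply[OF h True] by blast
    next
      case False
      then show ?thesis using class_outside[of i] \<open>i \<in> {1..k}\<close> by blast
    qed
  qed
  have "g ` verts H = {1..card C}"
    using h unfolding g_def C_def bij_betw_def by (simp add: image_image)
  moreover have "g u \<noteq> g v" if "u \<in> verts H" "v \<in> verts H" "adj H u v" for u v
  proof -
    have "f (e u) \<noteq> f (e v)" using that adj proper sub by blast
    moreover have "f (e u) \<in> C" "f (e v) \<in> C" using that unfolding C_def by auto
    ultimately show ?thesis using h unfolding g_def bij_betw_def by (auto dest: inj_onD)
  qed
  moreover have "inj_on (color_code H (card C) g) (verts H)"
  proof (rule inj_onI)
    fix a b assume "a \<in> verts H" "b \<in> verts H"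
      and "color_code H (card C) g a = color_code H (card C) g b"
    then have "color_code J k f (e a) = color_code J k f (e b)"
      by (rule color_code_eq_extend_joined[OF sub dist joined classes])
    then show "a = b" using code_inj inj \<open>a \<in> verts H\<close> \<open>b \<in> verts H\<close> sub
      by (auto dest: inj_onD)
  qed
  ultimately show ?thesis
    unfolding C_def by (intro locating_chromatic_number_le[of _ _ g])
      (simp add: locating_coloring_def proper_coloring_def)
qed

lemma color_code_eq_imp_same_color:
  assumes "dist_determined_by_adj G" "finite (verts G)" "proper_coloring G k f"
    and "x \<in> verts G" "y \<in> verts G" "color_code G k f x = color_code G k f y"
  shows "f x = f y"
proof -
  let ?S = "color_class G f (f x)"
  have fin: "finite ((\<lambda>v. gdist G y v) ` ?S)"
    using assms(2) by (intro finite_imageI finite_subset[OF color_class_subset])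
  have "x \<in> ?S" using assms(4) by (simp add: color_class_def)
  moreover have "gdist G x x = 0" using assms(1,4) by (simp add: dist_determined_by_adj_def)
  ultimately have "set_dist G x ?S = 0"
    using assms(2) unfolding set_dist_def
    by (metis Min_le finite_imageI finite_subset[OF color_class_subset] image_eqI le_zero_eq)
  moreover have "f x \<in> {1..k}" using assms(3,4) by (auto simp: proper_coloring_def)
  ultimately have "Min ((\<lambda>v. gdist G y v) ` ?S) = 0"
    using assms(6) unfolding color_code_eq_iff set_dist_def by metis
  then obtain v where "v \<in> ?S" "gdist G y v = 0"
    using Min_in[OF fin] \<open>x \<in> ?S\<close> by fastforce
  moreover have "v \<in> verts G" using \<open>v \<in> ?S\<close> by (simp add: color_class_def)
  ultimately have "v = y"
    using assms(1,5) unfolding dist_determined_by_adj_def by (metis one_neq_zero zero_neq_numeral)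
  then show ?thesis using \<open>v \<in> ?S\<close> by (simp add: color_class_def)
qed

lemma color_code_eq_restrict_embedded:
  assumes dist: "\<forall>u\<in>verts H. \<forall>v\<in>verts H. gdist J (e u) (e v) = gdist H u v"
    and classes: "\<forall>j\<in>{1..l}. \<exists>i\<in>{1..k}. color_class J f i = e ` color_class H g j"
    and "a \<in> verts H" "b \<in> verts H" "color_code J k f (e a) = color_code J k f (e b)"
  shows "color_code H l g a = color_code H l g b"
  unfolding color_code_eq_iff
proof
  fix j assume "j \<in> {1..l}"
  then obtain i where "i \<in> {1..k}" and i: "color_class J f i = e ` color_class H g j"
    using classes by blast
  have "set_dist J (e x) (color_class J f i) = set_dist H x (color_class H g j)"
    if "x \<in> verts H" for x
    unfolding i using dist that color_class_subset[of H g j] by (intro set_dist_image) blast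
  then show "set_dist H a (color_class H g j) = set_dist H b (color_class H g j)"
    using assms(3-5) \<open>i \<in> {1..k}\<close> unfolding color_code_eq_iff by metis
qed

lemma color_class_graph_join_Inl:
  assumes "\<forall>b\<in>verts G2. 1 \<le> f2 b" "j \<le> k1"
  shows "color_class (graph_join G1 G2) (case_sum f1 (\<lambda>b. k1 + f2 b)) j
    = Inl ` color_class G1 f1 j"
  using assms by (fastforce simp: color_class_def verts_graph_join)

lemma color_class_graph_join_Inr:
  assumes "\<forall>a\<in>verts G1. f1 a \<le> k1" "1 \<le> j"
  shows "color_class (graph_join G1 G2) (case_sum f1 (\<lambda>b. k1 + f2 b)) (k1 + j)
    = Inr ` color_class G2 f2 j"
  using assms by (fastforce simp: color_class_def verts_graph_join)

lemma locating_coloring_graph_join: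
  assumes G1: "dist_determined_by_adj G1" "finite (verts G1)" "verts G1 \<noteq> {}"
    and G2: "dist_determined_by_adj G2" "finite (verts G2)" "verts G2 \<noteq> {}"
    and f1: "locating_coloring G1 k1 f1" and f2: "locating_coloring G2 k2 f2"
  shows "locating_coloring (graph_join G1 G2) (k1 + k2) (case_sum f1 (\<lambda>b. k1 + f2 b))"
proof -
  let ?J = "graph_join G1 G2" and ?f = "case_sum f1 (\<lambda>b. k1 + f2 b)"
  have onto1: "f1 ` verts G1 = {1..k1}"
    and proper1: "\<forall>u\<in>verts G1. \<forall>v\<in>verts G1. adj G1 u v \<longrightarrow> f1 u \<noteq> f1 v"
    using f1 by (auto simp: locating_coloring_def proper_coloring_def)
  have onto2: "f2 ` verts G2 = {1..k2}"
    and proper2: "\<forall>u\<in>verts G2. \<forall>v\<in>verts G2. adj G2 u v \<longrightarrow> f2 u \<noteq> f2 v"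
    using f2 by (auto simp: locating_coloring_def proper_coloring_def)
  have "?f ` verts ?J = f1 ` verts G1 \<union> (+) k1 ` f2 ` verts G2"
    by (simp add: verts_graph_join image_Un image_image)
  also have "\<dots> = {1..k1 + k2}" unfolding onto1 onto2 by auto
  finally have onto: "?f ` verts ?J = {1..k1 + k2}" .
  have range1: "1 \<le> f1 a \<and> f1 a \<le> k1" if "a \<in> verts G1" for a
    using that onto1 by auto
  have range2: "1 \<le> f2 b \<and> f2 b \<le> k2" if "b \<in> verts G2" for b
    using that onto2 by auto
  have sides_differ: "f1 a \<noteq> k1 + f2 b" if "a \<in> verts G1" "b \<in> verts G2" for a b
    using range1[OF that(1)] range2[OF that(2)] by linarith
  have proper: "\<forall>x\<in>verts ?J. \<forall>y\<in>verts ?J. adj ?J x y \<longrightarrow> ?f x \<noteq> ?f y"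
    using proper1 proper2 sides_differ by (auto simp: verts_graph_join) (metis sides_differ)
  have proper_coloring: "proper_coloring ?J (k1 + k2) ?f"
    using onto proper by (simp add: proper_coloring_def)
  have finite: "finite (verts ?J)" using G1(2) G2(2) by (simp add: verts_graph_join)
  have "inj_on (color_code ?J (k1 + k2) ?f) (verts ?J)"
  proof (rule inj_onI)
    fix x y assume x: "x \<in> verts ?J" and y: "y \<in> verts ?J"
      and code: "color_code ?J (k1 + k2) ?f x = color_code ?J (k1 + k2) ?f y"
    have same_color: "?f x = ?f y"
      using dist_determined_by_adj_graph_join[OF G1(3) G2(3)] finite proper_coloring x y code
      by (rule color_code_eq_imp_same_color)
    show "x = y"
    proof (cases x; cases y)
      fix a b assume xy: "x = Inl a" "y = Inl b"
      have "\<forall>j\<in>{1..k1}. \<exists>i\<in>{1..k1 + k2}. color_class ?J ?f i = Inl ` color_class G1 f1 j"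
      proof
        fix j assume "j \<in> {1..k1}"
        then show "\<exists>i\<in>{1..k1 + k2}. color_class ?J ?f i = Inl ` color_class G1 f1 j"
          using range2 by (intro bexI[of _ j] color_class_graph_join_Inl) auto
      qed
      then have "color_code G1 k1 f1 a = color_code G1 k1 f1 b"
        using xy x y code gdist_graph_join_Inl[OF G1(1) G2(3)]
        by (intro color_code_eq_restrict_embedded[of G1 ?J Inl]) (auto simp: verts_graph_join)
      then show ?thesis
        using xy x y f1 by (auto simp: locating_coloring_def verts_graph_join dest: inj_onD)
    next
      fix a b assume xy: "x = Inr a" "y = Inr b"
      have "\<forall>j\<in>{1..k2}. \<exists>i\<in>{1..k1 + k2}. color_class ?J ?f i = Inr ` color_class G2 f2 j"
      proof
        fix j assume "j \<in> {1..k2}"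
        then show "\<exists>i\<in>{1..k1 + k2}. color_class ?J ?f i = Inr ` color_class G2 f2 j"
          using range1 by (intro bexI[of _ "k1 + j"] color_class_graph_join_Inr) auto
      qed
      then have "color_code G2 k2 f2 a = color_code G2 k2 f2 b"
        using xy x y code gdist_graph_join_Inr[OF G2(1) G1(3)]
        by (intro color_code_eq_restrict_embedded[of G2 ?J Inr]) (auto simp: verts_graph_join)
      then show ?thesis
        using xy x y f2 by (auto simp: locating_coloring_def verts_graph_join dest: inj_onD)
    qed (use same_color x y sides_differ in \<open>auto simp: verts_graph_join, metis\<close>)
  qed
  then show ?thesis using proper_coloring by (simp add: locating_coloring_def)
qed

theorem corollary1:
  fixes G1 :: "'a graph" and G2 :: "'b graph"
  assumes "simple_graph G1" and "simple_graph G2"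
    and "connected_graph G1" and "connected_graph G2"
    and "diameter G1 \<le> 2" and "diameter G2 \<le> 2"
  shows "locating_chromatic_number (graph_join G1 G2)
         = locating_chromatic_number G1 + locating_chromatic_number G2"
proof -
  let ?J = "graph_join G1 G2" and ?n1 = "locating_chromatic_number G1"
    and ?n2 = "locating_chromatic_number G2" and ?n = "locating_chromatic_number (graph_join G1 G2)"
  have G1: "dist_determined_by_adj G1" "finite (verts G1)" "verts G1 \<noteq> {}"
    using assms(1,3,5) dist_determined_by_adj_if_diameter_le_2
    by (auto simp: simple_graph_def connected_graph_def)
  have G2: "dist_determined_by_adj G2" "finite (verts G2)" "verts G2 \<noteq> {}"
    using assms(2,4,6) dist_determined_by_adj_if_diameter_le_2
    by (auto simp: simple_graph_def connected_graph_def)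
  obtain f1 where "locating_coloring G1 ?n1 f1"
    using locating_coloring_exists[OF assms(1,3)] locating_coloring_chromatic_number by metis
  moreover obtain f2 where "locating_coloring G2 ?n2 f2"
    using locating_coloring_exists[OF assms(2,4)] locating_coloring_chromatic_number by metis
  ultimately have join: "locating_coloring ?J (?n1 + ?n2) (case_sum f1 (\<lambda>b. ?n1 + f2 b))"
    using G1 G2 by (intro locating_coloring_graph_join)
  then obtain f where f: "locating_coloring ?J ?n f"
    by (rule locating_coloring_chromatic_number)
  have "?n1 \<le> card (f ` Inl ` verts G1)"
    using f gdist_graph_join_Inl[OF G1(1) G2(3)]
    by (intro locating_chromatic_number_le_card_restrict) (auto simp: verts_graph_join)
  moreover have "?n2 \<le> card (f ` Inr ` verts G2)"
    using f gdist_graph_join_Inr[OF G2(1) G1(3)]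
    by (intro locating_chromatic_number_le_card_restrict) (auto simp: verts_graph_join)
  moreover have "card (f ` Inl ` verts G1) + card (f ` Inr ` verts G2) = ?n"
    using f by (intro card_colors_split) (auto simp: locating_coloring_def verts_graph_join)
  moreover have "?n \<le> ?n1 + ?n2"
    using join by (rule locating_chromatic_number_le)
  ultimately show ?thesis by linarith
qed

end
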